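(* Let $n\ge5$, $x_1,\dots,x_{n-1}>0$, $\gamma,\delta>0$ with $\gamma\ne1\ne\delta$, $x_0=1$, and let $\mathbf{R}$ be the $n\times n$ matrix with entries $r_{ij}=x_{j-1}/x_{i-1}$ except $r_{12}=\delta x_1$, $r_{21}=1/(\delta x_1)$, $r_{34}=\gamma x_3/x_2$, $r_{43}=x_2/(\gamma x_3)$. Let $\mathbf{w}^{EM}$ be its principal right eigenvector. If $\gamma>1$ and $\delta<1$, then $w_2^{EM}/w_4^{EM}>x_3/x_1$; if $\gamma<1$ and $\delta>1$, then $w_2^{EM}/w_4^{EM}<x_3/x_1$.
   Context: The principal right eigenvector is the positive (Perron) eigenvector belonging to the largest eigenvalue. *)

theory Defs
  imports "Jordan_Normal_Form.Char_Poly"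
begin

text \<open>Indices are 0-based: entry (i,j) of the Isabelle matrix is the paper's r_{(i+1)(j+1)}.
  The weights x_0 = 1, x_1, ..., x_{n-1} are given by xx x k.\<close>

definition xx :: "(nat \<Rightarrow> real) \<Rightarrow> nat \<Rightarrow> real" where
  "xx x k = (if k = 0 then 1 else x k)"

definition EM_matrix :: "nat \<Rightarrow> (nat \<Rightarrow> real) \<Rightarrow> real \<Rightarrow> real \<Rightarrow> real mat" where
  "EM_matrix n x \<gamma> \<delta> = mat n n (\<lambda>(i, j).
     if (i, j) = (0, 1) then \<delta> * x 1
     else if (i, j) = (1, 0) then 1 / (\<delta> * x 1)
     else if (i, j) = (2, 3) then \<gamma> * x 3 / x 2
     else if (i, j) = (3, 2) then x 2 / (\<gamma> * x 3)
     else xx x j / xx x i)"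

definition principal_right_eigenvector :: "real mat \<Rightarrow> real vec \<Rightarrow> bool" where
  "principal_right_eigenvector A w \<longleftrightarrow>
     w \<in> carrier_vec (dim_col A) \<and> (\<forall>i < dim_vec w. w $ i > 0) \<and>
     (\<exists>r::real. A *\<^sub>v w = r \<cdot>\<^sub>v w \<and>
        (\<forall>\<mu>. eigenvalue (map_mat complex_of_real A) \<mu> \<longrightarrow> cmod \<mu> \<le> r))"

end

theory Submission
  imports Defs
begin

text \<open>Scale a positive eigenvector by the weights, v j = x j * w j, and let T be the sum of
  the v j. The matrix differs from the consistent matrix (x j / x i) only by the factors
  \<delta>, 1/\<delta> at (0,1), (1,0) and \<gamma>, 1/\<gamma> at (2,3), (3,2), so row i of the eigen-equation reads
  r * v i = T + (c - 1) * v k. The two perturbed pairs of rows decouple: they give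
  v 1 = T * f(\<delta>) and v 3 = T * f(\<gamma>) with f(d) = ((r - 1) d + 1) / ((d - 1)^2 + r^2 d), and
  together they force r > 3. For r \<ge> 2 the function f is strictly decreasing, so
  w 1 / w 3 = (x 3 / x 1) * f(\<delta>) / f(\<gamma>) exceeds x 3 / x 1 exactly when \<delta> < \<gamma>.\<close>

definition pair_weight :: "real \<Rightarrow> real \<Rightarrow> real" where
  "pair_weight r d = ((r - 1) * d + 1) / ((d - 1)\<^sup>2 + r\<^sup>2 * d)"

lemma pair_weight_pos:
  assumes "r \<ge> 1" "d > 0"
  shows "pair_weight r d > 0"
  using assms by (simp add: pair_weight_def add_nonneg_pos add_pos_nonneg)

lemma pair_weight_strict_antimono:
  assumes "r \<ge> 2" "0 < p" "p < q"
  shows "pair_weight r q < pair_weight r p"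
proof -
  define N where "N d = (r - 1) * d + 1" for d
  define D where "D d = (d - 1)\<^sup>2 + r\<^sup>2 * d" for d
  have D_pos: "D d > 0" if "d > 0" for d
    using that assms(1) by (simp add: D_def add_nonneg_pos)
  have "r\<^sup>2 \<ge> 2 * r"
    using assms(1) by (simp add: power2_eq_square)
  moreover have "(r - 1) * p * q > 0"
    using assms by simp
  ultimately have "(r - 1) * p * q + p + q + r\<^sup>2 - r - 1 > 0"
    using assms by linarith
  then have "(q - p) * ((r - 1) * p * q + p + q + r\<^sup>2 - r - 1) > 0"
    using assms(3) by simp
  also have "(q - p) * ((r - 1) * p * q + p + q + r\<^sup>2 - r - 1) = N p * D q - N q * D p"
    by (simp add: N_def D_def algebra_simps power2_eq_square)
  finally have "N q * D p < N p * D q"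
    by simp
  moreover have "D p > 0" "D q > 0"
    using D_pos assms(2,3) by auto
  ultimately have "N q / D q < N p / D p"
    by (simp add: field_simps)
  then show ?thesis
    by (simp add: pair_weight_def N_def D_def)
qed

lemma pair_weight_less_iff:
  assumes "r \<ge> 2" "p > 0" "q > 0"
  shows "pair_weight r q < pair_weight r p \<longleftrightarrow> p < q"
  using pair_weight_strict_antimono[OF assms(1,2)] pair_weight_strict_antimono[OF assms(1,3)]
  by (metis less_asym linorder_neqE_linordered_idom)

lemma reciprocal_pair_solution:
  fixes r T a b d :: real
  assumes "d > 0" "r \<noteq> 0"
    and "r * a = T + (d - 1) * b" "r * b = T + (1 / d - 1) * a"
  shows "b = T * pair_weight r d"
proof -
  have "d * (r * b) = d * T + (1 - d) * a"
    using assms(1,4) by (simp add: field_simps)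
  then have "r * (d * (r * b)) = r * (d * T + (1 - d) * a)"
    by simp
  then have "r * d * (r * b) = r * d * T + (1 - d) * (r * a)"
    by (simp add: algebra_simps)
  then have "b * ((d - 1)\<^sup>2 + r\<^sup>2 * d) = T * ((r - 1) * d + 1)"
    unfolding assms(3) by (simp add: algebra_simps power2_eq_square)
  moreover have "(d - 1)\<^sup>2 + r\<^sup>2 * d > 0"
    using assms(1,2) by (simp add: add_nonneg_pos)
  ultimately show ?thesis
    by (simp add: pair_weight_def field_simps)
qed

lemma reciprocal_pair_sum_bound:
  fixes r T a b d :: real
  assumes "d > 0" "a > 0" "b > 0"
    and "r * a = T + (d - 1) * b" "r * b = T + (1 / d - 1) * a"
  shows "2 * T < (r + 1) * (a + b)"
proof -
  have "(r + 1) * (a + b) = 2 * T + d * b + a / d"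
    using assms(4,5) by (simp add: algebra_simps)
  moreover have "d * b > 0" "a / d > 0"
    using assms(1-3) by simp_all
  ultimately show ?thesis
    by linarith
qed

lemma sum_scale_one_term:
  fixes f :: "'a \<Rightarrow> 'b::comm_ring_1"
  assumes "finite A" "k \<in> A"
  shows "(\<Sum>j\<in>A. (if j = k then c else 1) * f j) = sum f A + (c - 1) * f k"
proof -
  have "(\<Sum>j\<in>A. (if j = k then c else 1) * f j) = (\<Sum>j\<in>A. f j + (if j = k then (c - 1) * f j else 0))"
    by (rule sum.cong) (auto simp: algebra_simps)
  then show ?thesis
    using assms by (simp add: sum.distrib)
qed

definition EM_perturbation :: "real \<Rightarrow> real \<Rightarrow> nat \<Rightarrow> nat \<Rightarrow> real" where
  "EM_perturbation \<gamma> \<delta> i j =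
     (if (i, j) = (0, 1) then \<delta> else if (i, j) = (1, 0) then 1 / \<delta>
      else if (i, j) = (2, 3) then \<gamma> else if (i, j) = (3, 2) then 1 / \<gamma> else 1)"

lemma EM_matrix_scaled_entry:
  assumes "i < n" "j < n" and x_pos: "\<And>k. 1 \<le> k \<Longrightarrow> k \<le> n - 1 \<Longrightarrow> x k > 0"
  shows "xx x i * EM_matrix n x \<gamma> \<delta> $$ (i, j) = EM_perturbation \<gamma> \<delta> i j * xx x j"
proof -
  have xx_pos: "xx x k > 0" if "k < n" for k
    using x_pos[of k] that by (auto simp: xx_def)
  consider "(i, j) = (0, 1)" | "(i, j) = (1, 0)" | "(i, j) = (2, 3)" | "(i, j) = (3, 2)"
    | "(i, j) \<notin> {(0, 1), (1, 0), (2, 3), (3, 2)}"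
    by blast
  then show ?thesis
  proof cases
    case 5
    with assms(1,2) xx_pos[OF assms(1)] show ?thesis
      by (auto simp: EM_matrix_def EM_perturbation_def)
  qed (use assms(1,2) xx_pos[OF assms(1)] in \<open>simp_all add: EM_matrix_def EM_perturbation_def xx_def\<close>)
qed

lemma EM_eigen_equation_scaled:
  assumes x_pos: "\<And>k. 1 \<le> k \<Longrightarrow> k \<le> n - 1 \<Longrightarrow> x k > 0"
    and eig: "EM_matrix n x \<gamma> \<delta> *\<^sub>v w = r \<cdot>\<^sub>v w" and dim: "dim_vec w = n" and "i < n"
  shows "r * (xx x i * w $ i) = (\<Sum>j<n. EM_perturbation \<gamma> \<delta> i j * (xx x j * w $ j))"
proof -
  have "r * w $ i = (EM_matrix n x \<gamma> \<delta> *\<^sub>v w) $ i"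
    using eig dim \<open>i < n\<close> by simp
  also have "\<dots> = (\<Sum>j<n. EM_matrix n x \<gamma> \<delta> $$ (i, j) * w $ j)"
    using dim \<open>i < n\<close> by (simp add: EM_matrix_def scalar_prod_def lessThan_atLeast0)
  finally have "r * (xx x i * w $ i) = xx x i * (\<Sum>j<n. EM_matrix n x \<gamma> \<delta> $$ (i, j) * w $ j)"
    by (simp add: mult.left_commute)
  also have "\<dots> = (\<Sum>j<n. xx x i * EM_matrix n x \<gamma> \<delta> $$ (i, j) * w $ j)"
    by (simp add: sum_distrib_left mult.assoc)
  also have "\<dots> = (\<Sum>j<n. EM_perturbation \<gamma> \<delta> i j * (xx x j * w $ j))"
    using EM_matrix_scaled_entry[OF \<open>i < n\<close> _ x_pos] by (simp add: mult.assoc)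
  finally show ?thesis .
qed

lemma EM_positive_eigenvector_pair_weights:
  assumes "n \<ge> 4" and x_pos: "\<And>k. 1 \<le> k \<Longrightarrow> k \<le> n - 1 \<Longrightarrow> x k > 0"
    and "\<gamma> > 0" "\<delta> > 0"
    and eig: "EM_matrix n x \<gamma> \<delta> *\<^sub>v w = r \<cdot>\<^sub>v w" and dim: "dim_vec w = n"
    and w_pos: "\<And>i. i < n \<Longrightarrow> w $ i > 0"
  defines "T \<equiv> \<Sum>j<n. xx x j * w $ j"
  shows "r > 3" "x 1 * w $ 1 = T * pair_weight r \<delta>" "x 3 * w $ 3 = T * pair_weight r \<gamma>"
proof -
  define v where "v j = xx x j * w $ j" for j
  have v_pos: "v j > 0" if "j < n" for j
    using x_pos[of j] w_pos[OF that] that by (simp add: v_def xx_def)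
  have row: "r * v i = T + (c - 1) * v k"
    if "i < n" "k < n" "\<And>j. EM_perturbation \<gamma> \<delta> i j = (if j = k then c else 1)" for i k c
    using EM_eigen_equation_scaled[OF x_pos eig dim \<open>i < n\<close>] sum_scale_one_term[of "{..<n}" k c v] that
    by (simp add: v_def T_def)
  have pair01: "r * v 0 = T + (\<delta> - 1) * v 1" "r * v 1 = T + (1 / \<delta> - 1) * v 0"
    using row[of 0 1 \<delta>] row[of 1 0 "1 / \<delta>"] \<open>n \<ge> 4\<close> by (simp_all add: EM_perturbation_def)
  have pair23: "r * v 2 = T + (\<gamma> - 1) * v 3" "r * v 3 = T + (1 / \<gamma> - 1) * v 2"
    using row[of 2 3 \<gamma>] row[of 3 2 "1 / \<gamma>"] \<open>n \<ge> 4\<close> by (simp_all add: EM_perturbation_def)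
  define S where "S = v 0 + v 1 + v 2 + v 3"
  have "S \<le> T"
  proof -
    have "(\<Sum>j\<in>{0, 1, 2, 3}. v j) \<le> (\<Sum>j<n. v j)"
      by (rule sum_mono2) (use \<open>n \<ge> 4\<close> v_pos less_imp_le in auto)
    then show ?thesis
      by (simp add: S_def T_def v_def)
  qed
  moreover have "2 * T < (r + 1) * (v 0 + v 1)" "2 * T < (r + 1) * (v 2 + v 3)"
    using reciprocal_pair_sum_bound[OF \<open>\<delta> > 0\<close> _ _ pair01]
      reciprocal_pair_sum_bound[OF \<open>\<gamma> > 0\<close> _ _ pair23] v_pos \<open>n \<ge> 4\<close>
    by auto
  ultimately have "4 * S < (r + 1) * S"
    by (simp add: S_def algebra_simps)
  moreover have "S > 0"
    using v_pos \<open>n \<ge> 4\<close> by (simp add: S_def add_pos_pos)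
  ultimately show "r > 3"
    by (simp add: mult_less_cancel_right)
  then show "x 1 * w $ 1 = T * pair_weight r \<delta>" "x 3 * w $ 3 = T * pair_weight r \<gamma>"
    using reciprocal_pair_solution[OF \<open>\<delta> > 0\<close> _ pair01] reciprocal_pair_solution[OF \<open>\<gamma> > 0\<close> _ pair23]
    by (simp_all add: v_def xx_def)
qed

lemma EM_positive_eigenvector_ratio_less_iff:
  assumes "n \<ge> 4" and x_pos: "\<And>k. 1 \<le> k \<Longrightarrow> k \<le> n - 1 \<Longrightarrow> x k > 0"
    and "\<gamma> > 0" "\<delta> > 0"
    and eig: "EM_matrix n x \<gamma> \<delta> *\<^sub>v w = r \<cdot>\<^sub>v w" and dim: "dim_vec w = n"
    and w_pos: "\<And>i. i < n \<Longrightarrow> w $ i > 0"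
  shows "x 3 / x 1 < w $ 1 / w $ 3 \<longleftrightarrow> \<delta> < \<gamma>" "w $ 1 / w $ 3 < x 3 / x 1 \<longleftrightarrow> \<gamma> < \<delta>"
proof -
  note weights = EM_positive_eigenvector_pair_weights[OF assms]
  define c where "c = x 3 / x 1"
  have "x 1 > 0" "x 3 > 0" "w $ 3 > 0" "pair_weight r \<gamma> > 0"
    using assms(1,3) x_pos w_pos weights(1) pair_weight_pos[of r] by auto
  then have ratio: "w $ 1 / w $ 3 = c * (pair_weight r \<delta> / pair_weight r \<gamma>)"
    using weights(2,3) by (simp add: c_def field_simps)
  have "c > 0"
    using \<open>x 1 > 0\<close> \<open>x 3 > 0\<close> by (simp add: c_def)
  moreover have "pair_weight r \<gamma> < pair_weight r \<delta> \<longleftrightarrow> \<delta> < \<gamma>"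
    "pair_weight r \<delta> < pair_weight r \<gamma> \<longleftrightarrow> \<gamma> < \<delta>"
    using pair_weight_less_iff weights(1) assms(3,4) by simp_all
  ultimately show "x 3 / x 1 < w $ 1 / w $ 3 \<longleftrightarrow> \<delta> < \<gamma>" "w $ 1 / w $ 3 < x 3 / x 1 \<longleftrightarrow> \<gamma> < \<delta>"
    unfolding ratio c_def[symmetric] using \<open>pair_weight r \<gamma> > 0\<close>
    by (simp_all add: field_simps mult_less_cancel_left_pos)
qed

theorem mainTheorem19:
  fixes n :: nat and x :: "nat \<Rightarrow> real" and \<gamma> \<delta> :: real and w :: "real vec"
  assumes "n \<ge> 5"
    and "\<And>k. 1 \<le> k \<Longrightarrow> k \<le> n - 1 \<Longrightarrow> x k > 0"
    and "\<gamma> > 0" and "\<delta> > 0" and "\<gamma> \<noteq> 1" and "\<delta> \<noteq> 1"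
    and "principal_right_eigenvector (EM_matrix n x \<gamma> \<delta>) w"
  shows "(\<gamma> > 1 \<and> \<delta> < 1 \<longrightarrow> w $ 1 / w $ 3 > x 3 / x 1) \<and>
         (\<gamma> < 1 \<and> \<delta> > 1 \<longrightarrow> w $ 1 / w $ 3 < x 3 / x 1)"
proof -
  obtain r where eig: "EM_matrix n x \<gamma> \<delta> *\<^sub>v w = r \<cdot>\<^sub>v w" and dim: "dim_vec w = n"
    and w_pos: "\<And>i. i < n \<Longrightarrow> w $ i > 0"
    using assms(7) by (auto simp: principal_right_eigenvector_def EM_matrix_def)
  have "n \<ge> 4"
    using assms(1) by simp
  then show ?thesis
    using EM_positive_eigenvector_ratio_less_iff[of n x \<gamma> \<delta> w r] assms(2-4) eig dim w_pos
    by auto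
qed

end
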